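(* In the setting described in the context, Algorithm 1 run on $(\psi,\mathcal{A})$, where $\psi$ is the weighted MaxSAT instance produced by Reduction 4, terminates and returns an array $\mathrm{Ans}$ such that for every $\vec a_l\in\mathcal{A}$, $\vec a_l\in\mathrm{Cons}(Q,I,\Sigma)$ if and only if $\mathrm{Ans}[l]$ is true.
   Context: An $\mathcal{R}$-instance $I$ is a finite set of facts. A (subset) repair of $I$ w.r.t. a set $\Sigma$ of constraints is a $J\subseteq I$ with $J\models\Sigma$ maximal under inclusion among subsets of $I$ satisfying $\Sigma$; $\mathrm{Cons}(Q,I,\Sigma)=\bigcap\{Q(J):J\text{ a repair of }I\}$. Potential answers: $\mathcal{A}=Q(I)$, enumerated as $\vec a_1,\vec a_2,\dots$. Setting: either (a) $\Sigma$ is a set of primary key constraints (one per relation) on a schema $\mathcal{R}$, $Q$ is a fixed non-boolean conjunctive query, and $\phi$ is the CNF-formula of Reduction 2; or (b) $\Sigma$ is a fixed finite set of denial constraints, $Q$ is a fixed union of non-boolean conjunctive queries, and $\phi$ is the CNF form of the formula $\phi'$ of Reduction 3. In both cases $\phi$ contains a variable $p_l$ for each $\vec a_l\in\mathcal{A}$, each $p_l$ occurs in $\phi$ only as the negative literal $\neg p_l$, and $\phi$ has the property that there is a satisfying assignment of $\phi$ with $p_l=1$ iff $\vec a_l\notin\mathrm{Cons}(Q,I,\Sigma)$. (Reduction 2: variables $x_i$ per fact $f_i$; clauses $\bigvee_{f_i\in G}x_i$ for each key-equal group $G$, i.e. maximal set of facts of one relation agreeing on the key attributes; clauses $\big(\bigvee_{f_i\in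 W}\neg x_i\big)\vee\neg p_l$ for each minimal witness $W$ to $Q[\vec a_l]$, i.e. inclusion-minimal $W\subseteq I$ satisfying the boolean query obtained by substituting $\vec a_l$ for the free variables. Reduction 3: additionally uses clauses $\bigvee_{f_i\in V}\neg x_i$ for each inclusion-minimal $V\subseteq I$ violating $\Sigma$, and for each fact $f_i$ the clause $x_i\vee\bigvee_j y^i_j$ together with $y^i_j\leftrightarrow\bigwedge_{f_d\in N^i_j}x_d$, where the $N^i_j$ are the near-violations w.r.t. $f_i$: sets $S\models\Sigma$ with $S\cup\{f_i\}$ a minimal violation, or $\{f_{true}\}$ with $x_{true}=\mathrm{true}$ if $\{f_i\}$ is itself a minimal violation; in place of key-equal group clauses.) Weighted MaxSAT: hard and weighted soft clauses; an optimal solution satisfies all hard clauses and maximizes total weight of satisfied soft clauses. Reduction 4: make all clauses of $\phi$ hard, and add for each $\vec a_l\in\mathcal{A}$ a soft unit clause $(p_l)$, all of equal weight; the result is $\psi$. Algorithm 1 on input $(\psi,\mathcal{A})$: set $\mathrm{Ans}[l]=\mathrm{true}$ for all $l$ and $moreAnswers=\mathrm{true}$. While $moreAnswers$: set $moreAnswers=\mathrm{false}$; let $opt$ be an optimal solution of the current $\psi$; for each $l$ with $opt(p_l)=1$: set $moreAnswers=\mathrm{true}$, $\mathrm{Ans}[l]=\mathrm{false}$, remove the unit clause $(p_l)$ from $\psi$, remove all clauses containing the literal $\neg p_l$ from $\psi$, and add the hard unit clause $(\neg p_l)$ to $\psi$. Finally return $\mathrm{Ans}$. *)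

theory Defs
  imports Main
begin

text \<open>The constraint set Sigma is
 represented by its satisfaction predicate on instances (sat J iff J models Sigma), the query Q by
 its answer function on instances.\<close>

definition is_repair :: "('f set \<Rightarrow> bool) \<Rightarrow> 'f set \<Rightarrow> 'f set \<Rightarrow> bool" where
  "is_repair sat I J \<longleftrightarrow> J \<subseteq> I \<and> sat J \<and> (\<forall>J'. J \<subset> J' \<and> J' \<subseteq> I \<longrightarrow> \<not> sat J')"

definition Cons :: "('f set \<Rightarrow> 'a set) \<Rightarrow> 'f set \<Rightarrow> ('f set \<Rightarrow> bool) \<Rightarrow> 'a set" where
  "Cons Q I sat = \<Inter> {Q J | J. is_repair sat I J}"

type_synonym 'v lit = "'v \<times> bool"   \<comment> \<open>(variable, polarity); (v,False) is the literal not v\<close>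
type_synonym 'v clause = "'v lit set"

definition sat_clause :: "('v \<Rightarrow> bool) \<Rightarrow> 'v clause \<Rightarrow> bool" where
  "sat_clause \<sigma> C \<longleftrightarrow> (\<exists>(v, b) \<in> C. \<sigma> v = b)"

definition sat_cnf :: "('v \<Rightarrow> bool) \<Rightarrow> 'v clause set \<Rightarrow> bool" where
  "sat_cnf \<sigma> F \<longleftrightarrow> (\<forall>C \<in> F. sat_clause \<sigma> C)"

definition soft_value :: "('v clause \<times> nat) set \<Rightarrow> ('v \<Rightarrow> bool) \<Rightarrow> nat" where
  "soft_value S \<sigma> = (\<Sum>(C, w) \<in> {(C, w) \<in> S. sat_clause \<sigma> C}. w)"

definition optimal :: "'v clause set \<Rightarrow> ('v clause \<times> nat) set \<Rightarrow> ('v \<Rightarrow> bool) \<Rightarrow> bool" where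
  "optimal H S \<sigma> \<longleftrightarrow> sat_cnf \<sigma> H \<and>
     (\<forall>\<sigma>'. sat_cnf \<sigma>' H \<longrightarrow> soft_value S \<sigma>' \<le> soft_value S \<sigma>)"

text \<open>p l is the variable p_l of the potential answer with index l < n (0-based);
 all soft unit clauses get the same weight w.\<close>

definition reduction4 :: "'v clause set \<Rightarrow> (nat \<Rightarrow> 'v) \<Rightarrow> nat \<Rightarrow> nat
    \<Rightarrow> 'v clause set \<times> ('v clause \<times> nat) set" where
  "reduction4 \<phi> p n w = (\<phi>, {({(p l, True)}, w) | l. l < n})"

text \<open>One iteration of the while loop with chosen optimal
 solution opt handles all l with opt(p_l) = 1 (set L); the for loop over L is performed as one batch
 update (its result does not depend on the order).\<close>

type_synonym 'v alg_state = "'v clause set \<times> ('v clause \<times> nat) set \<times> (nat \<Rightarrow> bool)"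

definition sel :: "(nat \<Rightarrow> 'v) \<Rightarrow> nat \<Rightarrow> ('v \<Rightarrow> bool) \<Rightarrow> nat set" where
  "sel p n opt = {l. l < n \<and> opt (p l)}"

definition alg_update :: "(nat \<Rightarrow> 'v) \<Rightarrow> nat set \<Rightarrow> 'v alg_state \<Rightarrow> 'v alg_state" where
  "alg_update p L s = (case s of (H, S, Ans) \<Rightarrow>
     ({C \<in> H. \<forall>l \<in> L. (p l, False) \<notin> C} \<union> {{(p l, False)} | l. l \<in> L},
      {(C, c) \<in> S. \<forall>l \<in> L. C \<noteq> {(p l, True)}},
      (\<lambda>k. if k \<in> L then False else Ans k)))"

text \<open>An iteration that sets moreAnswers = true (some opt(p_l) = 1).\<close>
definition alg_step :: "(nat \<Rightarrow> 'v) \<Rightarrow> nat \<Rightarrow> 'v alg_state \<Rightarrow> 'v alg_state \<Rightarrow> bool" where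
  "alg_step p n s s' \<longleftrightarrow> (case s of (H, S, Ans) \<Rightarrow>
     (\<exists>opt. optimal H S opt \<and> sel p n opt \<noteq> {} \<and> s' = alg_update p (sel p n opt) s))"

inductive alg_result :: "(nat \<Rightarrow> 'v) \<Rightarrow> nat \<Rightarrow> 'v alg_state \<Rightarrow> (nat \<Rightarrow> bool) \<Rightarrow> bool"
  for p n where
  stop: "optimal H S opt \<Longrightarrow> sel p n opt = {} \<Longrightarrow> alg_result p n (H, S, Ans) Ans"
| continue: "alg_step p n s s' \<Longrightarrow> alg_result p n s' R \<Longrightarrow> alg_result p n s R"

definition alg_init :: "'v clause set \<times> ('v clause \<times> nat) set \<Rightarrow> 'v alg_state" where
  "alg_init \<psi> = (fst \<psi>, snd \<psi>, (\<lambda>_. True))"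

end

theory Submission
  imports Defs
begin

text \<open>After the loop has refuted the answers with indices in D, the hard clauses are equivalent to
 \<phi> together with \<not>p_l for l \<in> D, and the soft clauses are the units p_l for the remaining
 indices.  Each iteration refutes at least one new answer, so the loop stops after at most n
 iterations.  When it stops, the optimum satisfies no soft clause; yet if some remaining p_l were
 satisfiable together with \<phi>, setting all refuted p-variables to false (harmless, since they occur
 in \<phi> only negatively) would give a solution satisfying the soft clause p_l.  Hence exactly the
 answers outside Cons are marked false.\<close>

lemma soft_value_le_total_weight:
  "finite S \<Longrightarrow> soft_value S \<sigma> \<le> (\<Sum>(C, w) \<in> S. w)"
  unfolding soft_value_def by (rule sum_mono2) auto

lemma weight_le_soft_value:
  assumes "finite S" "(C, w) \<in> S" "sat_clause \<sigma> C"
  shows "w \<le> soft_value S \<sigma>"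
proof -
  have "finite {(C, w) \<in> S. sat_clause \<sigma> C}"
    using assms(1) by (rule finite_subset[rotated]) auto
  moreover have "(C, w) \<in> {(C, w) \<in> S. sat_clause \<sigma> C}"
    using assms(2,3) by simp
  ultimately show ?thesis
    unfolding soft_value_def by (metis (mono_tags, lifting) case_prod_conv member_le_sum zero_le)
qed

lemma soft_value_eq_0:
  "\<forall>(C, w) \<in> S. \<not> sat_clause \<sigma> C \<Longrightarrow> soft_value S \<sigma> = 0"
  unfolding soft_value_def by (auto intro: sum.neutral)

lemma optimal_exists:
  assumes "\<exists>\<sigma>. sat_cnf \<sigma> H" "finite S"
  shows "\<exists>opt. optimal H S opt"
proof -
  define V where "V = soft_value S ` {\<sigma>. sat_cnf \<sigma> H}"
  have "finite V"
    unfolding V_def using soft_value_le_total_weight[OF assms(2)]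
    by (intro finite_nat_set_iff_bounded_le[THEN iffD2]) blast
  moreover have "V \<noteq> {}"
    using assms(1) unfolding V_def by blast
  ultimately have "Max V \<in> V" and max: "\<And>\<sigma>. sat_cnf \<sigma> H \<Longrightarrow> soft_value S \<sigma> \<le> Max V"
    unfolding V_def by simp_all
  then obtain opt where "sat_cnf opt H" "Max V = soft_value S opt"
    unfolding V_def by blast
  with max show ?thesis
    unfolding optimal_def by metis
qed

lemma sat_cnf_clear_negative_vars:
  assumes "sat_cnf \<sigma> \<phi>" and "\<forall>v \<in> V. \<forall>C \<in> \<phi>. (v, True) \<notin> C"
  shows "sat_cnf (\<lambda>v. v \<notin> V \<and> \<sigma> v) \<phi>"
  unfolding sat_cnf_def
proof
  fix C assume "C \<in> \<phi>"
  then obtain v b where vb: "(v, b) \<in> C" "\<sigma> v = b"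
    using assms(1) unfolding sat_cnf_def sat_clause_def by blast
  have "(v \<notin> V \<and> \<sigma> v) = b"
  proof (cases "v \<in> V")
    case True
    then have "b = False"
      using assms(2) \<open>C \<in> \<phi>\<close> vb(1) by (cases b) auto
    then show ?thesis using True by simp
  qed (use vb(2) in simp)
  with vb(1) show "sat_clause (\<lambda>v. v \<notin> V \<and> \<sigma> v) C"
    unfolding sat_clause_def by blast
qed

lemma finite_strict_chain_impossible:
  assumes "finite A" "\<And>i. g i \<subseteq> A" "\<And>i. g i \<subset> g (Suc i)"
  shows False
proof -
  have "i \<le> card (g i)" for i
  proof (induction i)
    case (Suc i)
    have "card (g i) < card (g (Suc i))"
      using assms by (meson psubset_card_mono rev_finite_subset)
    then show ?case using Suc.IH by simp
  qed simp
  moreover have "card (g i) \<le> card A" for i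
    using assms(1,2) by (rule card_mono)
  ultimately show False
    by (metis Suc_n_not_le_n le_trans)
qed

definition pruned_hard :: "'v clause set \<Rightarrow> (nat \<Rightarrow> 'v) \<Rightarrow> nat set \<Rightarrow> 'v clause set" where
  "pruned_hard \<phi> p D = {C \<in> \<phi>. \<forall>l \<in> D. (p l, False) \<notin> C} \<union> {{(p l, False)} | l. l \<in> D}"

definition remaining_soft :: "(nat \<Rightarrow> 'v) \<Rightarrow> nat \<Rightarrow> nat \<Rightarrow> nat set \<Rightarrow> ('v clause \<times> nat) set" where
  "remaining_soft p n w D = {({(p l, True)}, w) | l. l < n \<and> l \<notin> D}"

lemma sat_cnf_pruned_hard_iff:
  "sat_cnf \<sigma> (pruned_hard \<phi> p D) \<longleftrightarrow> sat_cnf \<sigma> \<phi> \<and> (\<forall>l \<in> D. \<not> \<sigma> (p l))"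
proof
  assume sat: "sat_cnf \<sigma> (pruned_hard \<phi> p D)"
  have units: "\<forall>l \<in> D. \<not> \<sigma> (p l)"
  proof
    fix l assume "l \<in> D"
    then have "{(p l, False)} \<in> pruned_hard \<phi> p D"
      unfolding pruned_hard_def by blast
    then have "sat_clause \<sigma> {(p l, False)}"
      using sat unfolding sat_cnf_def by blast
    then show "\<not> \<sigma> (p l)"
      unfolding sat_clause_def by simp
  qed
  have "sat_cnf \<sigma> \<phi>"
    unfolding sat_cnf_def
  proof
    fix C assume C: "C \<in> \<phi>"
    show "sat_clause \<sigma> C"
    proof (cases "\<exists>l \<in> D. (p l, False) \<in> C")
      case True
      then obtain l where "l \<in> D" "(p l, False) \<in> C"
        by blast
      moreover from \<open>l \<in> D\<close> have "\<sigma> (p l) = False"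
        using units by blast
      ultimately show ?thesis
        unfolding sat_clause_def by blast
    next
      case False
      then have "C \<in> pruned_hard \<phi> p D"
        using C unfolding pruned_hard_def by blast
      then show ?thesis
        using sat unfolding sat_cnf_def by blast
    qed
  qed
  with units show "sat_cnf \<sigma> \<phi> \<and> (\<forall>l \<in> D. \<not> \<sigma> (p l))"
    by blast
next
  assume "sat_cnf \<sigma> \<phi> \<and> (\<forall>l \<in> D. \<not> \<sigma> (p l))"
  then show "sat_cnf \<sigma> (pruned_hard \<phi> p D)"
    unfolding sat_cnf_def sat_clause_def pruned_hard_def by fastforce
qed

lemma finite_remaining_soft: "finite (remaining_soft p n w D)"
proof -
  have "remaining_soft p n w D \<subseteq> (\<lambda>l. ({(p l, True)}, w)) ` {..<n}"
    unfolding remaining_soft_def by auto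
  then show ?thesis by (rule finite_subset) simp
qed

locale reduction4_run =
  fixes \<phi> :: "'v clause set" and p :: "nat \<Rightarrow> 'v" and n w :: nat
  assumes inj_p: "inj_on p {..<n}"
    and p_negative: "\<forall>l < n. \<forall>C \<in> \<phi>. (p l, True) \<notin> C"
    and satisfiable: "\<exists>\<sigma>. sat_cnf \<sigma> \<phi>"
    and weight_pos: "w > 0"
begin

definition state :: "nat set \<Rightarrow> 'v alg_state" where
  "state D = (pruned_hard \<phi> p D, remaining_soft p n w D, (\<lambda>k. k \<notin> D))"

definition refuted :: "nat set \<Rightarrow> bool" where
  "refuted D \<longleftrightarrow> D \<subseteq> {..<n} \<and> (\<forall>l \<in> D. \<exists>\<sigma>. sat_cnf \<sigma> \<phi> \<and> \<sigma> (p l))"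

lemma state_inject: "state D = state D' \<longleftrightarrow> D = D'"
  unfolding state_def by (auto simp: fun_eq_iff)

lemma alg_init_reduction4: "alg_init (reduction4 \<phi> p n w) = state {}"
  unfolding alg_init_def reduction4_def state_def pruned_hard_def remaining_soft_def by auto

lemma refuted_card_le: "refuted D \<Longrightarrow> card D \<le> n"
  unfolding refuted_def by (metis card_lessThan card_mono finite_lessThan)

lemma sat_cnf_clear_p:
  assumes "sat_cnf \<sigma> \<phi>" "D \<subseteq> {..<n}"
  shows "sat_cnf (\<lambda>v. v \<notin> p ` D \<and> \<sigma> v) (pruned_hard \<phi> p D)"
  unfolding sat_cnf_pruned_hard_iff
  using sat_cnf_clear_negative_vars[OF assms(1), of "p ` D"] p_negative assms(2) by auto

lemma optimal_state_exists:
  "D \<subseteq> {..<n} \<Longrightarrow> \<exists>opt. optimal (pruned_hard \<phi> p D) (remaining_soft p n w D) opt"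
  using satisfiable sat_cnf_clear_p by (blast intro: optimal_exists finite_remaining_soft)

lemma alg_update_state:
  assumes "D \<subseteq> {..<n}" "L \<subseteq> {..<n}" "L \<inter> D = {}"
  shows "alg_update p L (state D) = state (D \<union> L)"
proof -
  have p_eq: "p k = p l \<longleftrightarrow> k = l" if "k < n" "l < n" for k l
    using inj_p that unfolding inj_on_def by blast
  have "{C \<in> pruned_hard \<phi> p D. \<forall>l \<in> L. (p l, False) \<notin> C} \<union> {{(p l, False)} | l. l \<in> L}
      = pruned_hard \<phi> p (D \<union> L)"
    unfolding pruned_hard_def using assms p_eq by blast
  moreover have "{(C, c) \<in> remaining_soft p n w D. \<forall>l \<in> L. C \<noteq> {(p l, True)}}
      = remaining_soft p n w (D \<union> L)"
    unfolding remaining_soft_def using assms p_eq by auto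
  ultimately show ?thesis
    unfolding alg_update_def state_def by auto
qed

lemma alg_step_state:
  assumes "refuted D" "alg_step p n (state D) s'"
  obtains D' where "refuted D'" "s' = state D'" "D \<subset> D'"
proof -
  obtain opt where opt: "optimal (pruned_hard \<phi> p D) (remaining_soft p n w D) opt"
    and L: "sel p n opt \<noteq> {}" and s': "s' = alg_update p (sel p n opt) (state D)"
    using assms(2) unfolding alg_step_def state_def by auto
  have D: "D \<subseteq> {..<n}"
    using assms(1) unfolding refuted_def by blast
  have "sat_cnf opt \<phi>" "\<forall>l \<in> D. \<not> opt (p l)"
    using opt unfolding optimal_def sat_cnf_pruned_hard_iff by auto
  then have "sel p n opt \<subseteq> {..<n}" "sel p n opt \<inter> D = {}"
    and "refuted (D \<union> sel p n opt)"
    using assms(1) unfolding sel_def refuted_def by auto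
  moreover have "D \<subset> D \<union> sel p n opt"
    using L \<open>sel p n opt \<inter> D = {}\<close> by blast
  ultimately show ?thesis
    using that s' alg_update_state[OF D] by blast
qed

lemma reachable_state:
  "(alg_step p n)\<^sup>*\<^sup>* (state {}) s \<Longrightarrow> \<exists>D. refuted D \<and> s = state D"
proof (induction rule: rtranclp_induct)
  case base
  then show ?case unfolding refuted_def by blast
next
  case (step s s')
  then show ?case by (metis alg_step_state)
qed

lemma no_infinite_run:
  "\<nexists>f. f 0 = state {} \<and> (\<forall>i. alg_step p n (f i) (f (Suc i)))"
proof
  assume "\<exists>f. f 0 = state {} \<and> (\<forall>i. alg_step p n (f i) (f (Suc i)))"
  then obtain f where f0: "f 0 = state {}" and run: "\<forall>i. alg_step p n (f i) (f (Suc i))"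
    by blast
  have "(alg_step p n)\<^sup>*\<^sup>* (state {}) (f i)" for i
    by (induction i) (use f0 run in \<open>auto intro: rtranclp.rtrancl_into_rtrancl\<close>)
  then have "\<forall>i. \<exists>D. refuted D \<and> f i = state D"
    using reachable_state by blast
  then obtain g where g: "\<And>i. refuted (g i)" "\<And>i. f i = state (g i)"
    using choice by metis
  have "g i \<subset> g (Suc i)" for i
  proof -
    obtain D' where "state (g (Suc i)) = state D'" "g i \<subset> D'"
      using alg_step_state[OF g(1)] run g(2) by metis
    then show ?thesis
      unfolding state_inject by simp
  qed
  moreover have "g i \<subseteq> {..<n}" for i
    using g unfolding refuted_def by blast
  ultimately show False
    using finite_strict_chain_impossible[of "{..<n}" g] by blast
qed

lemma alg_result_exists: "refuted D \<Longrightarrow> \<exists>R. alg_result p n (state D) R"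
proof (induction "n - card D" arbitrary: D rule: less_induct)
  case less
  obtain opt where opt: "optimal (pruned_hard \<phi> p D) (remaining_soft p n w D) opt"
    using optimal_state_exists less.prems unfolding refuted_def by blast
  show ?case
  proof (cases "sel p n opt = {}")
    case True
    then show ?thesis
      unfolding state_def using alg_result.stop[OF opt True] by blast
  next
    case False
    let ?s' = "alg_update p (sel p n opt) (state D)"
    have step: "alg_step p n (state D) ?s'"
      unfolding alg_step_def using opt False by (auto simp: state_def)
    then obtain D' where D': "refuted D'" "?s' = state D'" "D \<subset> D'"
      using alg_step_state less.prems by blast
    then have "card D < card D'"
      by (meson psubset_card_mono finite_lessThan finite_subset refuted_def)
    with refuted_card_le[OF D'(1)] have "n - card D' < n - card D"
      by simp
    then show ?thesis
      using less.hyps D' alg_result.continue[OF step] by metis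
  qed
qed

text \<open>At a stopping optimum no soft clause is satisfied, so its value is 0, while clearing the
 refuted p-variables in a witness for p_l would satisfy the soft clause p_l.\<close>

lemma stop_unrefuted_consistent:
  assumes "refuted D"
    and opt: "optimal (pruned_hard \<phi> p D) (remaining_soft p n w D) opt"
    and "sel p n opt = {}" "l < n" "l \<notin> D"
  shows "\<not> (\<exists>\<sigma>. sat_cnf \<sigma> \<phi> \<and> \<sigma> (p l))"
proof
  assume "\<exists>\<sigma>. sat_cnf \<sigma> \<phi> \<and> \<sigma> (p l)"
  then obtain \<sigma> where \<sigma>: "sat_cnf \<sigma> \<phi>" "\<sigma> (p l)"
    by blast
  define \<tau> where "\<tau> = (\<lambda>v. v \<notin> p ` D \<and> \<sigma> v)"
  have D: "D \<subseteq> {..<n}"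
    using assms(1) unfolding refuted_def by blast
  have "p l \<notin> p ` D"
    using inj_p assms(4,5) D unfolding inj_on_def by blast
  then have "w \<le> soft_value (remaining_soft p n w D) \<tau>"
    using assms(4,5) \<sigma>(2) unfolding \<tau>_def
    by (intro weight_le_soft_value[OF finite_remaining_soft, of "{(p l, True)}"])
       (auto simp: remaining_soft_def sat_clause_def)
  also have "\<dots> \<le> soft_value (remaining_soft p n w D) opt"
    using opt sat_cnf_clear_p[OF \<sigma>(1) D] unfolding optimal_def \<tau>_def by blast
  also have "\<dots> = 0"
    using assms(3) by (intro soft_value_eq_0) (auto simp: remaining_soft_def sel_def sat_clause_def)
  finally show False
    using weight_pos by simp
qed

lemma alg_result_correct:
  assumes "alg_result p n s R" "refuted D" "s = state D" "l < n"
  shows "R l \<longleftrightarrow> \<not> (\<exists>\<sigma>. sat_cnf \<sigma> \<phi> \<and> \<sigma> (p l))"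
  using assms
proof (induction arbitrary: D rule: alg_result.induct)
  case (stop H S opt Ans)
  then have "H = pruned_hard \<phi> p D" "S = remaining_soft p n w D" "Ans = (\<lambda>k. k \<notin> D)"
    unfolding state_def by auto
  then show ?case
    using stop stop_unrefuted_consistent[of D opt l] unfolding refuted_def by auto
next
  case (continue s s' R)
  then show ?case by (metis alg_step_state)
qed

end

theorem proposition4:
  fixes I :: "'f set" and sat :: "'f set \<Rightarrow> bool" and Q :: "'f set \<Rightarrow> 'a set"
    and as :: "'a list" and \<phi> :: "'v clause set" and p :: "nat \<Rightarrow> 'v" and w :: nat
  assumes "finite I"
    and "distinct as" and "set as = Q I"
    and "finite \<phi>" and "\<forall>C \<in> \<phi>. finite C"
    and "inj_on p {..<length as}"
    and "\<forall>l < length as. \<forall>C \<in> \<phi>. (p l, True) \<notin> C"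
    and "\<exists>\<sigma>. sat_cnf \<sigma> \<phi>"
    and "\<forall>l < length as. (\<exists>\<sigma>. sat_cnf \<sigma> \<phi> \<and> \<sigma> (p l)) \<longleftrightarrow> as ! l \<notin> Cons Q I sat"
    and "w > 0"
  shows "(\<nexists>f. f 0 = alg_init (reduction4 \<phi> p (length as) w) \<and>
              (\<forall>i. alg_step p (length as) (f i) (f (Suc i))))
       \<and> (\<forall>s. (alg_step p (length as))\<^sup>*\<^sup>* (alg_init (reduction4 \<phi> p (length as) w)) s \<longrightarrow>
              (\<exists>opt. optimal (fst s) (fst (snd s)) opt))
       \<and> (\<exists>R. alg_result p (length as) (alg_init (reduction4 \<phi> p (length as) w)) R)
       \<and> (\<forall>R. alg_result p (length as) (alg_init (reduction4 \<phi> p (length as) w)) R \<longrightarrow>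
              (\<forall>l < length as. as ! l \<in> Cons Q I sat \<longleftrightarrow> R l))"
proof -
  interpret reduction4_run \<phi> p "length as" w
    using assms(6-8,10) by unfold_locales
  have start: "refuted {}"
    unfolding refuted_def by simp
  have "\<exists>opt. optimal (fst s) (fst (snd s)) opt"
    if "(alg_step p (length as))\<^sup>*\<^sup>* (state {}) s" for s
    using reachable_state[OF that] optimal_state_exists
    unfolding refuted_def state_def by auto
  moreover have "as ! l \<in> Cons Q I sat \<longleftrightarrow> R l"
    if "alg_result p (length as) (state {}) R" "l < length as" for R l
    using alg_result_correct[OF that(1) start refl that(2)] assms(9) that(2) by blast
  ultimately show ?thesis
    unfolding alg_init_reduction4 using no_infinite_run alg_result_exists[OF start]
    by (intro conjI allI impI) auto
qed

end
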